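(* Let $R$ be a finitely generated standard algebra with a rate filtration $\mathbf F$ of some degree $d$ such that the set $\mathcal{H}$ of Hilbert series $\{I(z): I\in\mathbf F\}$ is finite. Then the Hilbert series $R(z)$ of $R$ and the Hilbert series $I(z)$ of every $I\in\mathbf F$ are rational functions. Moreover, if $\mathcal H$ contains exactly $s$ nonzero elements, then each of these rational functions can be written as a quotient of two polynomials with integer coefficients of degrees at most $ds$.
   Context: $R$ standard: graded, $R_0=k$, generated by $R_1$, finite-dimensional components, $R_+=\bigoplus_{i>0}R_i$. The Hilbert series of a graded space $V$ is $V(z)=\sum_j\dim V_j z^j$. For a homogeneous right ideal $J$, $m(J)$ is the maximal degree of a minimal homogeneous generator. A rate filtration is a set $\mathbf F$ of finitely generated homogeneous right ideals with $0,R_+\in\mathbf F$ such that for every $0\ne I\in\mathbf F$ there exist $J\in\mathbf F$, $J\ne I$, and a homogeneous $x\in I$ with $I=J+xR$, $m(J)\le m(I)$, and $(J:x)=\{a\in R: xa\in J\}\in\mathbf F$; it is of degree $d$ if $m(I)\le d$ for all $I\in\mathbf F$. *)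

theory Defs
  imports "HOL-Computational_Algebra.Polynomial_FPS"
begin

text \<open>
  Setting: a (not necessarily commutative) ring R, given as the whole type 'a :: ring_1,
  which is an algebra over a field k (type 'k) via the scalar multiplication scale,
  and graded by the family of k-subspaces Rg 0, Rg 1, Rg 2, ...
\<close>

definition k_algebra :: "('k::field \<Rightarrow> 'a::ring_1 \<Rightarrow> 'a) \<Rightarrow> bool" where
  "k_algebra scale \<longleftrightarrow> vector_space scale \<and>
     (\<forall>c x y. scale c (x * y) = scale c x * y \<and> scale c (x * y) = x * scale c y)"

definition graded_algebra :: "('k::field \<Rightarrow> 'a::ring_1 \<Rightarrow> 'a) \<Rightarrow> (nat \<Rightarrow> 'a set) \<Rightarrow> bool" where
  "graded_algebra scale Rg \<longleftrightarrow> k_algebra scale \<and>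
     (\<forall>i. module.subspace scale (Rg i)) \<and>
     (\<forall>i j x y. x \<in> Rg i \<longrightarrow> y \<in> Rg j \<longrightarrow> x * y \<in> Rg (i + j)) \<and>
     (\<forall>x. \<exists>n f. (\<forall>i. f i \<in> Rg i) \<and> x = (\<Sum>i<n. f i)) \<and>
     (\<forall>n f. (\<forall>i. f i \<in> Rg i) \<longrightarrow> (\<Sum>i<n. f i) = 0 \<longrightarrow> (\<forall>i<n. f i = 0))"

definition standard_algebra :: "('k::field \<Rightarrow> 'a::ring_1 \<Rightarrow> 'a) \<Rightarrow> (nat \<Rightarrow> 'a set) \<Rightarrow> bool" where
  "standard_algebra scale Rg \<longleftrightarrow> graded_algebra scale Rg \<and>
     Rg 0 = range (\<lambda>c. scale c 1) \<and>
     (\<forall>n. Rg (Suc n) = module.span scale {x * y | x y. x \<in> Rg n \<and> y \<in> Rg 1}) \<and>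
     (\<forall>n. \<exists>B. finite B \<and> module.span scale B = Rg n)"

definition homogeneous_elt :: "(nat \<Rightarrow> 'a::ring_1 set) \<Rightarrow> 'a \<Rightarrow> bool" where
  "homogeneous_elt Rg x \<longleftrightarrow> (\<exists>j. x \<in> Rg j)"

text \<open>Degree of a nonzero homogeneous element.\<close>
definition hdeg :: "(nat \<Rightarrow> 'a::ring_1 set) \<Rightarrow> 'a \<Rightarrow> nat" where
  "hdeg Rg x = (THE j. x \<in> Rg j)"

definition R_plus :: "(nat \<Rightarrow> 'a::ring_1 set) \<Rightarrow> 'a set" where
  "R_plus Rg = {x. \<exists>n f. (\<forall>i. f i \<in> Rg (Suc i)) \<and> x = (\<Sum>i<n. f i)}"

definition right_ideal :: "'a::ring_1 set \<Rightarrow> bool" where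
  "right_ideal I \<longleftrightarrow> 0 \<in> I \<and> (\<forall>x\<in>I. \<forall>y\<in>I. x + y \<in> I) \<and> (\<forall>x\<in>I. - x \<in> I) \<and>
     (\<forall>x\<in>I. \<forall>a. x * a \<in> I)"

definition rideal_gen :: "'a::ring_1 set \<Rightarrow> 'a set" where
  "rideal_gen G = \<Inter>{I. right_ideal I \<and> G \<subseteq> I}"

definition hom_right_ideal :: "(nat \<Rightarrow> 'a::ring_1 set) \<Rightarrow> 'a set \<Rightarrow> bool" where
  "hom_right_ideal Rg I \<longleftrightarrow> right_ideal I \<and>
     (\<forall>x\<in>I. \<exists>n f. (\<forall>i. f i \<in> Rg i \<inter> I) \<and> x = (\<Sum>i<n. f i))"

definition fin_gen :: "'a::ring_1 set \<Rightarrow> bool" where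
  "fin_gen I \<longleftrightarrow> (\<exists>G. finite G \<and> I = rideal_gen G)"

definition min_hom_gens :: "(nat \<Rightarrow> 'a::ring_1 set) \<Rightarrow> 'a set \<Rightarrow> 'a set \<Rightarrow> bool" where
  "min_hom_gens Rg J G \<longleftrightarrow> (\<forall>g\<in>G. homogeneous_elt Rg g) \<and> rideal_gen G = J \<and>
     (\<forall>g\<in>G. rideal_gen (G - {g}) \<noteq> J)"

definition mdeg :: "(nat \<Rightarrow> 'a::ring_1 set) \<Rightarrow> 'a set \<Rightarrow> nat" where
  "mdeg Rg J = Max (insert 0 (hdeg Rg ` (SOME G. min_hom_gens Rg J G)))"

definition colon :: "'a::ring_1 set \<Rightarrow> 'a \<Rightarrow> 'a set" where
  "colon J x = {a. x * a \<in> J}"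

definition rate_filtration :: "(nat \<Rightarrow> 'a::ring_1 set) \<Rightarrow> 'a set set \<Rightarrow> bool" where
  "rate_filtration Rg F \<longleftrightarrow>
     (\<forall>I\<in>F. fin_gen I \<and> hom_right_ideal Rg I) \<and> {0} \<in> F \<and> R_plus Rg \<in> F \<and>
     (\<forall>I\<in>F. I \<noteq> {0} \<longrightarrow>
        (\<exists>J\<in>F. \<exists>x. J \<noteq> I \<and> homogeneous_elt Rg x \<and> x \<in> I \<and>
           I = {j + x * a | j a. j \<in> J} \<and> mdeg Rg J \<le> mdeg Rg I \<and> colon J x \<in> F))"

definition rate_filtration_of_degree :: "(nat \<Rightarrow> 'a::ring_1 set) \<Rightarrow> 'a set set \<Rightarrow> nat \<Rightarrow> bool" where
  "rate_filtration_of_degree Rg F d \<longleftrightarrow> rate_filtration Rg F \<and> (\<forall>I\<in>F. mdeg Rg I \<le> d)"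

text \<open>Hilbert series of a graded subspace V (V = I for an ideal, V = UNIV for R itself).\<close>
definition hilbert_series :: "('k::field \<Rightarrow> 'a::ring_1 \<Rightarrow> 'a) \<Rightarrow> (nat \<Rightarrow> 'a set) \<Rightarrow> 'a set \<Rightarrow> int fps" where
  "hilbert_series scale Rg V = Abs_fps (\<lambda>j. int (vector_space.dim scale (V \<inter> Rg j)))"

end

theory Submission
  imports Defs "Jordan_Normal_Form.Determinant"
begin

text \<open>
  Every \<open>I \<noteq> 0\<close> in \<open>\<^bold>F\<close> is \<open>J + xR\<close> with \<open>J \<in> \<^bold>F\<close>, \<open>J \<subset> I\<close> and \<open>x\<close> homogeneous of degree
  \<open>e \<le> m(I) \<le> d\<close>, and the exact sequence \<open>0 \<rightarrow> (J : x)(-e) \<rightarrow> J \<oplus> R(-e) \<rightarrow> I \<rightarrow> 0\<close>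
  gives \<open>I(z) = J(z) + z\<^sup>e (R(z) - (J : x)(z))\<close>, where \<open>J(z)\<close> lies coefficientwise strictly
  below \<open>I(z)\<close>. Since \<open>R(z) = R\<^sub>0 + R\<^sub>+(z)\<close> and all of \<open>J\<close>, \<open>J : x\<close>, \<open>R\<^sub>+\<close> lie in \<open>\<^bold>F\<close>, one
  such relation for each of the \<open>s\<close> nonzero series in \<open>\<H>\<close> is a square linear system over
  \<open>\<int>[z]\<close> with entries of degree \<open>\<le> d\<close>. At \<open>z = 0\<close> its matrix is unitriangular with respect
  to the coefficientwise order, so its determinant is a nonzero polynomial of degree
  \<open>\<le> ds\<close>, and Cramer's rule makes it a common denominator of all these series and of \<open>R(z)\<close>.
\<close>

section \<open>Finite-dimensional subspaces\<close>

context vector_space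
begin

lemma obtain_finite_basis:
  assumes "subspace V" "V \<subseteq> span S" "finite S"
  obtains B where "finite B" "B \<subseteq> V" "independent B" "span B = V" "card B = dim V"
proof -
  obtain B where B: "B \<subseteq> V" "independent B" "V \<subseteq> span B" "card B = dim V"
    using basis_exists by blast
  have "finite B"
    using independent_span_bound[OF assms(3) B(2)] B(1) assms(2) by blast
  moreover have "span B = V"
    using B assms(1) span_subspace by blast
  ultimately show thesis
    using that B by blast
qed

lemma dim_le_dim_subspace:
  assumes "U \<subseteq> W" "subspace W" "W \<subseteq> span S" "finite S"
  shows "dim U \<le> dim W"
proof -
  obtain B where "finite B" "span B = W" "card B = dim W"
    using obtain_finite_basis[OF assms(2-4)] by blast
  then show ?thesis
    using dim_le_card[of U B] assms(1) by auto
qed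

lemma subspace_eq_if_dim_eq:
  assumes "U \<subseteq> W" "subspace U" "subspace W" "W \<subseteq> span S" "finite S" "dim U = dim W"
  shows "U = W"
proof (rule ccontr)
  assume "U \<noteq> W"
  then obtain w where w: "w \<in> W" "w \<notin> U"
    using assms(1) by blast
  obtain B where B: "finite B" "B \<subseteq> U" "independent B" "span B = U" "card B = dim U"
    using obtain_finite_basis[OF assms(2) _ assms(5)] assms(1,4) by blast
  have "independent (insert w B)"
    using independent_insertI B w by auto
  moreover have "insert w B \<subseteq> W"
    using B w assms(1) by auto
  ultimately have "card (insert w B) \<le> dim W"
    using dim_le_dim_subspace[OF _ assms(3-5)] dim_eq_card_independent by metis
  moreover have "w \<notin> B"
    using B(2) w(2) by blast
  ultimately show False
    using B assms(6) by simp
qed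

lemma dim_zero: "dim {0} = 0"
  using dim_le_card[of "{0}" "{}"] by simp

lemma span_insert_span: "span (insert v (span S)) = span (insert v S)"
proof
  show "span (insert v (span S)) \<subseteq> span (insert v S)"
    by (intro span_minimal) (auto intro: span_base span_mono[THEN subsetD])
qed (intro span_mono, auto intro: span_base)

lemma dim_span_insert:
  assumes "subspace U" "U \<subseteq> span S" "finite S" "v \<notin> U"
  shows "dim (span (insert v U)) = dim U + 1"
proof -
  obtain B where B: "finite B" "B \<subseteq> U" "independent B" "span B = U" "card B = dim U"
    using obtain_finite_basis[OF assms(1-3)] by blast
  have "span (insert v B) = span (insert v U)"
    by (metis B(4) span_insert_span)
  moreover have "independent (insert v B)"
    using independent_insertI B assms(4) by auto
  moreover have "v \<notin> B"
    using B(2) assms(4) by blast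
  ultimately show ?thesis
    using B by (metis dim_span dim_eq_card_independent card_insert_disjoint Suc_eq_plus1)
qed

lemma image_notin_span_Un_image:
  assumes f: "Vector_Spaces.linear scale scale f" and J: "subspace J"
    and B: "independent B" "BK \<subseteq> B"
    and BK: "\<And>a. a \<in> span B \<Longrightarrow> f a \<in> J \<Longrightarrow> a \<in> span BK"
    and "p \<in> B - BK" "Q \<subseteq> B - BK" "p \<notin> Q"
  shows "f p \<notin> span (J \<union> f ` (BK \<union> Q))"
proof
  interpret f: Vector_Spaces.linear scale scale f by (rule f)
  assume "f p \<in> span (J \<union> f ` (BK \<union> Q))"
  then obtain j a where ja: "f p = j + f a" "j \<in> J" "a \<in> span (BK \<union> Q)"
    unfolding span_Un[of J] f.span_image span_eq_iff[THEN iffD2, OF J] by blast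
  have "BK \<union> Q \<subseteq> B - {p}"
    using assms(6-8) B(2) by auto
  then have a: "a \<in> span (B - {p})"
    using ja(3) span_mono by blast
  then have "p - a \<in> span B"
    using assms(6) span_mono[of "B - {p}" B] span_base[of p B] span_diff by blast
  moreover have "f (p - a) \<in> J"
    using ja(1,2) by (simp add: f.diff)
  ultimately have "p - a \<in> span (B - {p})"
    using BK span_mono[of BK "B - {p}"] \<open>BK \<union> Q \<subseteq> B - {p}\<close> by blast
  then have "p \<in> span (B - {p})"
    using a span_add by fastforce
  then show False
    using B(1) assms(6) dependent_def by blast
qed

text \<open>The images of the basis vectors outside \<open>BK\<close> are independent modulo \<open>J\<close>.\<close>
lemma dim_span_Un_image:
  assumes f: "Vector_Spaces.linear scale scale f"
    and J: "subspace J" "J \<subseteq> span SJ" "finite SJ"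
    and B: "independent B" "finite B" "BK \<subseteq> B"
    and BK: "\<And>a. a \<in> span B \<Longrightarrow> f a \<in> J \<longleftrightarrow> a \<in> span BK"
  shows "dim (span (J \<union> f ` B)) = dim J + card (B - BK)"
proof -
  define T where "T Q = span (J \<union> f ` (BK \<union> Q))" for Q
  have dim_T: "dim (T Q) = dim J + card Q" if "finite Q" "Q \<subseteq> B - BK" for Q
    using that
  proof (induction Q rule: finite_induct)
    case empty
    have "f ` BK \<subseteq> J"
      using BK B(3) span_base by blast
    then show ?case
      unfolding T_def using J(1) by (simp add: Un_absorb2)
  next
    case (insert p Q)
    have "f p \<notin> T Q"
      unfolding T_def using insert BK by (intro image_notin_span_Un_image[OF f J(1) B(1,3)]) auto
    moreover have "T (insert p Q) = span (insert (f p) (T Q))"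
      unfolding T_def span_insert_span by (simp add: insert_commute)
    moreover have "T Q \<subseteq> span (SJ \<union> f ` (BK \<union> Q))"
      unfolding T_def using J(2) by (intro span_minimal) (auto intro: span_base span_mono[THEN subsetD])
    moreover have "finite (SJ \<union> f ` (BK \<union> Q))"
      using J(3) B(2,3) insert.hyps(1) by (simp add: finite_subset)
    ultimately have "dim (T (insert p Q)) = dim (T Q) + 1"
      using dim_span_insert[of "T Q"] unfolding T_def by simp
    then show ?case
      using insert by simp
  qed
  have "T (B - BK) = span (J \<union> f ` B)"
    unfolding T_def using B(3) by (simp add: Un_absorb1)
  then show ?thesis
    using dim_T[of "B - BK"] B(2) by simp
qed

text \<open>Rank--nullity for the map \<open>(j, a) \<mapsto> j + f a\<close> on \<open>J \<times> A\<close>, whose kernel is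
  isomorphic to \<open>{a \<in> A. f a \<in> J}\<close>.\<close>
lemma dim_sum_image_add_dim_preimage:
  assumes f: "Vector_Spaces.linear scale scale f"
    and J: "subspace J" "J \<subseteq> span SJ" "finite SJ"
    and A: "subspace A" "A \<subseteq> span SA" "finite SA"
  shows "dim {j + f a | j a. j \<in> J \<and> a \<in> A} + dim {a \<in> A. f a \<in> J} = dim J + dim A"
proof -
  interpret f: Vector_Spaces.linear scale scale f by (rule f)
  define K where "K = {a \<in> A. f a \<in> J}"
  have K: "subspace K" "K \<subseteq> A"
    using A(1) J(1) unfolding K_def subspace_def by (auto simp: f.add f.scale)
  obtain BK where BK: "finite BK" "BK \<subseteq> K" "independent BK" "span BK = K" "card BK = dim K"
    using obtain_finite_basis[OF K(1) _ A(3)] K(2) A(2) by blast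
  obtain BA where BA: "BK \<subseteq> BA" "BA \<subseteq> A" "independent BA" "A \<subseteq> span BA"
    using maximal_independent_subset_extend[of BK A] BK K(2) by blast
  have "finite BA"
    using independent_span_bound[OF A(3) BA(3)] BA(2) A(2) by blast
  have "span BA = A"
    using BA A(1) span_subspace by blast
  have "{j + f a | j a. j \<in> J \<and> a \<in> A} = span (J \<union> f ` BA)"
    unfolding span_Un[of J] f.span_image span_eq_iff[THEN iffD2, OF J(1)] \<open>span BA = A\<close> by blast
  also have "dim \<dots> = dim J + card (BA - BK)"
    using \<open>span BA = A\<close> BK(4) BA(1,3) \<open>finite BA\<close> unfolding K_def
    by (intro dim_span_Un_image[OF f J]) auto
  finally have "dim {j + f a | j a. j \<in> J \<and> a \<in> A} = dim J + card (BA - BK)" .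
  moreover have "card BA = dim A"
    using basis_card_eq_dim BA(2-4) by blast
  moreover have "card BK \<le> card BA"
    using card_mono[OF \<open>finite BA\<close> BA(1)] .
  ultimately show ?thesis
    using BK(5) BA(1) \<open>finite BA\<close> unfolding K_def by (simp add: card_Diff_subset finite_subset)
qed

end

section \<open>Right ideals\<close>

lemma right_ideal_zero: "right_ideal I \<Longrightarrow> 0 \<in> I"
  unfolding right_ideal_def by blast

lemma right_ideal_add: "right_ideal I \<Longrightarrow> x \<in> I \<Longrightarrow> y \<in> I \<Longrightarrow> x + y \<in> I"
  unfolding right_ideal_def by blast

lemma right_ideal_mult: "right_ideal I \<Longrightarrow> x \<in> I \<Longrightarrow> x * a \<in> I"
  unfolding right_ideal_def by blast

lemma right_ideal_sum: "right_ideal I \<Longrightarrow> (\<And>a. a \<in> A \<Longrightarrow> f a \<in> I) \<Longrightarrow> sum f A \<in> I"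
  by (induction A rule: infinite_finite_induct) (auto simp: right_ideal_zero right_ideal_add)

lemma right_ideal_UNIV: "right_ideal UNIV"
  unfolding right_ideal_def by simp

lemma right_ideal_rideal_gen: "right_ideal (rideal_gen G)"
  unfolding rideal_gen_def right_ideal_def by blast

lemma rideal_gen_superset: "G \<subseteq> rideal_gen G"
  unfolding rideal_gen_def by blast

lemma rideal_gen_minimal: "right_ideal I \<Longrightarrow> G \<subseteq> I \<Longrightarrow> rideal_gen G \<subseteq> I"
  unfolding rideal_gen_def by blast

lemma rideal_gen_mono: "G \<subseteq> G' \<Longrightarrow> rideal_gen G \<subseteq> rideal_gen G'"
  using rideal_gen_minimal[OF right_ideal_rideal_gen] rideal_gen_superset by blast

lemma rideal_gen_Diff_zero: "rideal_gen (G - {0}) = rideal_gen G"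
proof
  have "G \<subseteq> rideal_gen (G - {0})"
    using rideal_gen_superset[of "G - {0}"] right_ideal_zero[OF right_ideal_rideal_gen] by blast
  then show "rideal_gen G \<subseteq> rideal_gen (G - {0})"
    by (rule rideal_gen_minimal[OF right_ideal_rideal_gen])
qed (rule rideal_gen_mono, blast)

lemma rideal_gen_finite_support:
  assumes "y \<in> rideal_gen G"
  obtains G' where "finite G'" "G' \<subseteq> G" "y \<in> rideal_gen G'"
proof -
  define S where "S = {y. \<exists>G'. finite G' \<and> G' \<subseteq> G \<and> y \<in> rideal_gen G'}"
  have "right_ideal S"
    unfolding right_ideal_def
  proof (intro conjI ballI allI)
    show "0 \<in> S"
      unfolding S_def using right_ideal_zero[OF right_ideal_rideal_gen] by blast
  next
    fix x y assume "x \<in> S" "y \<in> S"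
    then obtain G1 G2 where "finite G1" "G1 \<subseteq> G" "x \<in> rideal_gen G1"
      "finite G2" "G2 \<subseteq> G" "y \<in> rideal_gen G2"
      unfolding S_def by blast
    then have "x \<in> rideal_gen (G1 \<union> G2)" "y \<in> rideal_gen (G1 \<union> G2)"
      "finite (G1 \<union> G2)" "G1 \<union> G2 \<subseteq> G"
      using rideal_gen_mono[of G1 "G1 \<union> G2"] rideal_gen_mono[of G2 "G1 \<union> G2"] by auto
    then show "x + y \<in> S"
      unfolding S_def using right_ideal_add[OF right_ideal_rideal_gen] by blast
  next
    fix x assume "x \<in> S"
    then show "- x \<in> S"
      unfolding S_def using right_ideal_rideal_gen unfolding right_ideal_def by blast
  next
    fix x a assume "x \<in> S"
    then show "x * a \<in> S"
      unfolding S_def using right_ideal_mult[OF right_ideal_rideal_gen] by blast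
  qed
  moreover have "G \<subseteq> S"
    unfolding S_def using rideal_gen_superset by blast
  ultimately have "rideal_gen G \<subseteq> S"
    by (rule rideal_gen_minimal)
  then show thesis
    using assms that unfolding S_def by blast
qed

lemma finite_generating_subset:
  assumes "fin_gen I" "rideal_gen G = I"
  obtains G' where "finite G'" "G' \<subseteq> G" "rideal_gen G' = I"
proof -
  obtain G0 where G0: "finite G0" "I = rideal_gen G0"
    using assms(1) unfolding fin_gen_def by blast
  have "\<forall>g0\<in>G0. \<exists>G'. finite G' \<and> G' \<subseteq> G \<and> g0 \<in> rideal_gen G'"
  proof
    fix g0 assume "g0 \<in> G0"
    then have "g0 \<in> rideal_gen G"
      using G0(2) assms(2) rideal_gen_superset by blast
    then obtain G' where "finite G'" "G' \<subseteq> G" "g0 \<in> rideal_gen G'"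
      by (rule rideal_gen_finite_support)
    then show "\<exists>G'. finite G' \<and> G' \<subseteq> G \<and> g0 \<in> rideal_gen G'"
      by blast
  qed
  then obtain Gs where Gs: "\<forall>g0\<in>G0. finite (Gs g0) \<and> Gs g0 \<subseteq> G \<and> g0 \<in> rideal_gen (Gs g0)"
    by (rule bchoice[THEN exE])
  have "g0 \<in> rideal_gen (\<Union> (Gs ` G0))" if "g0 \<in> G0" for g0
    using Gs that rideal_gen_mono[of "Gs g0" "\<Union> (Gs ` G0)"] by blast
  then have "I \<subseteq> rideal_gen (\<Union> (Gs ` G0))"
    using G0(2) rideal_gen_minimal[OF right_ideal_rideal_gen] by blast
  moreover have "\<Union> (Gs ` G0) \<subseteq> G"
    using Gs by blast
  then have "rideal_gen (\<Union> (Gs ` G0)) \<subseteq> I"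
    using assms(2) rideal_gen_mono by blast
  moreover have "finite (\<Union> (Gs ` G0))"
    using G0(1) Gs by blast
  ultimately show thesis
    using that \<open>\<Union> (Gs ` G0) \<subseteq> G\<close> by blast
qed

lemma obtain_irredundant_generators:
  assumes "finite G"
  obtains G' where "G' \<subseteq> G" "rideal_gen G' = rideal_gen G"
    "\<And>g. g \<in> G' \<Longrightarrow> rideal_gen (G' - {g}) \<noteq> rideal_gen G"
  using assms
proof (induction G arbitrary: thesis rule: finite_psubset_induct)
  case (psubset G)
  show ?case
  proof (cases "\<exists>g\<in>G. rideal_gen (G - {g}) = rideal_gen G")
    case True
    then obtain g where g: "g \<in> G" "rideal_gen (G - {g}) = rideal_gen G"
      by blast
    then have "G - {g} \<subset> G"
      by blast
    then obtain G' where G': "G' \<subseteq> G - {g}" "rideal_gen G' = rideal_gen (G - {g})"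
      "\<And>h. h \<in> G' \<Longrightarrow> rideal_gen (G' - {h}) \<noteq> rideal_gen (G - {g})"
      using psubset.IH by blast
    show ?thesis
    proof (rule psubset.prems)
      show "G' \<subseteq> G"
        using G'(1) by blast
    qed (use G'(2,3) g(2) in simp_all)
  next
    case False
    show ?thesis
      by (rule psubset.prems[of G]) (use False in auto)
  qed
qed

lemma min_hom_gensD:
  assumes "min_hom_gens Rg J G"
  shows "rideal_gen G = J" "g \<in> G \<Longrightarrow> homogeneous_elt Rg g"
    "g \<in> G \<Longrightarrow> rideal_gen (G - {g}) \<noteq> J"
  using assms unfolding min_hom_gens_def by blast+

lemma min_hom_gens_finite:
  assumes "fin_gen I" "min_hom_gens Rg I G"
  shows "finite G"
proof -
  obtain G' where G': "finite G'" "G' \<subseteq> G" "rideal_gen G' = I"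
    using finite_generating_subset[OF assms(1) min_hom_gensD(1)[OF assms(2)]] by blast
  have "G \<subseteq> G'"
  proof
    fix g assume "g \<in> G"
    show "g \<in> G'"
    proof (rule ccontr)
      assume "g \<notin> G'"
      then have "I \<subseteq> rideal_gen (G - {g})"
        using G' rideal_gen_mono[of G' "G - {g}"] by blast
      moreover have "rideal_gen (G - {g}) \<subseteq> I"
        using min_hom_gensD(1)[OF assms(2)] rideal_gen_mono[of "G - {g}" G] by blast
      ultimately show False
        using min_hom_gensD(3)[OF assms(2) \<open>g \<in> G\<close>] by blast
    qed
  qed
  then show ?thesis
    using G'(1) by (rule finite_subset)
qed

lemma hom_right_ideal_right_ideal: "hom_right_ideal Rg I \<Longrightarrow> right_ideal I"
  unfolding hom_right_ideal_def by blast

section \<open>Graded rings\<close>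

lemma sum_lessThan_extend:
  fixes f :: "nat \<Rightarrow> 'a::comm_monoid_add"
  shows "\<forall>i\<ge>N. f i = 0 \<Longrightarrow> N \<le> L \<Longrightarrow> (\<Sum>i<L. f i) = (\<Sum>i<N. f i)"
  by (intro sum.mono_neutral_right) auto

locale graded =
  fixes scale :: "'k::field \<Rightarrow> 'a::ring_1 \<Rightarrow> 'a" and Rg :: "nat \<Rightarrow> 'a set"
  assumes graded_algebra: "graded_algebra scale Rg"
begin

sublocale vs: vector_space scale
  using graded_algebra unfolding graded_algebra_def k_algebra_def by blast

lemma scale_mult_right: "scale c (x * y) = x * scale c y"
  using graded_algebra unfolding graded_algebra_def k_algebra_def by blast

lemma scale_mult_left: "scale c (x * y) = scale c x * y"
  using graded_algebra unfolding graded_algebra_def k_algebra_def by blast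

lemma scale_eq_mult: "scale c x = x * scale c 1"
  using scale_mult_right[of c x 1] by simp

lemma subspace_Rg: "vs.subspace (Rg i)"
  using graded_algebra unfolding graded_algebra_def by blast

lemma zero_Rg: "0 \<in> Rg i"
  using subspace_Rg vs.subspace_0 by blast

lemma mult_Rg: "x \<in> Rg i \<Longrightarrow> y \<in> Rg j \<Longrightarrow> x * y \<in> Rg (i + j)"
  using graded_algebra unfolding graded_algebra_def by blast

lemma graded_decomposition:
  "\<exists>f. (\<forall>i. f i \<in> Rg i) \<and> (\<exists>N. (\<forall>i\<ge>N. f i = 0) \<and> x = (\<Sum>i<N. f i))"
proof -
  obtain n f where f: "\<forall>i. f i \<in> Rg i" "x = (\<Sum>i<n. f i)"
    using graded_algebra unfolding graded_algebra_def by blast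
  define g where "g i = (if i < n then f i else 0)" for i
  have "\<forall>i. g i \<in> Rg i" "\<forall>i\<ge>n. g i = 0" "x = (\<Sum>i<n. g i)"
    using f zero_Rg unfolding g_def by auto
  then show ?thesis
    by blast
qed

lemma graded_sum_eq_zero:
  "\<forall>i. f i \<in> Rg i \<Longrightarrow> (\<Sum>i<n. f i) = 0 \<Longrightarrow> i < n \<Longrightarrow> f i = 0"
  using graded_algebra unfolding graded_algebra_def by blast

lemma graded_decomposition_unique:
  assumes "\<forall>i. f i \<in> Rg i" "\<forall>i\<ge>N. f i = 0" "\<forall>i. g i \<in> Rg i" "\<forall>i\<ge>M. g i = 0"
    and "(\<Sum>i<N. f i) = (\<Sum>i<M. g i)"
  shows "f = g"
proof
  fix i
  define L where "L = max N M"
  have "(\<Sum>i<L. f i) = (\<Sum>i<N. f i)" "(\<Sum>i<L. g i) = (\<Sum>i<M. g i)"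
    using assms(2,4) sum_lessThan_extend unfolding L_def by (metis max.cobounded1 max.cobounded2)+
  then have "(\<Sum>i<L. f i - g i) = 0"
    using assms(5) by (simp add: sum_subtractf)
  moreover have "\<forall>i. f i - g i \<in> Rg i"
    using assms(1,3) subspace_Rg vs.subspace_diff by blast
  ultimately have "i < L \<Longrightarrow> f i - g i = 0"
    using graded_sum_eq_zero[of "\<lambda>i. f i - g i" L i] by blast
  then show "f i = g i"
    using assms(2,4) by (cases "i < L") (auto simp: L_def)
qed

definition hcomp :: "'a \<Rightarrow> nat \<Rightarrow> 'a" where
  "hcomp x = (SOME f. (\<forall>i. f i \<in> Rg i) \<and> (\<exists>N. (\<forall>i\<ge>N. f i = 0) \<and> x = (\<Sum>i<N. f i)))"

lemma hcomp_decomposition: "(\<forall>i. hcomp x i \<in> Rg i) \<and> (\<exists>N. (\<forall>i\<ge>N. hcomp x i = 0) \<and> x = (\<Sum>i<N. hcomp x i))"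
  unfolding hcomp_def by (rule someI_ex[OF graded_decomposition])

lemma hcomp_Rg: "hcomp x i \<in> Rg i"
  using hcomp_decomposition by blast

lemma hcomp_eqI:
  assumes "\<forall>i. f i \<in> Rg i" "\<forall>i\<ge>N. f i = 0" "x = (\<Sum>i<N. f i)"
  shows "hcomp x = f"
  using hcomp_decomposition[of x] assms graded_decomposition_unique[of "hcomp x" _ f N] by metis

lemma hcomp_eventually_zero: "\<exists>N. \<forall>i\<ge>N. hcomp x i = 0"
  using hcomp_decomposition by blast

lemma hcomp_eventually_zero_uniform:
  assumes "finite A"
  shows "\<exists>N. \<forall>x\<in>A. \<forall>i\<ge>N. hcomp x i = 0"
  using assms
proof (induction rule: finite_induct)
  case (insert x A)
  obtain N M where "\<forall>y\<in>A. \<forall>i\<ge>N. hcomp y i = 0" "\<forall>i\<ge>M. hcomp x i = 0"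
    using insert.IH hcomp_eventually_zero by blast
  then show ?case
    by (intro exI[of _ "max N M"]) auto
qed simp

lemma sum_hcomp: "\<forall>i\<ge>L. hcomp x i = 0 \<Longrightarrow> (\<Sum>i<L. hcomp x i) = x"
proof -
  assume L: "\<forall>i\<ge>L. hcomp x i = 0"
  obtain N where N: "\<forall>i\<ge>N. hcomp x i = 0" "x = (\<Sum>i<N. hcomp x i)"
    using hcomp_decomposition by blast
  have "(\<Sum>i<N. hcomp x i) = (\<Sum>i<max N L. hcomp x i)"
    "(\<Sum>i<L. hcomp x i) = (\<Sum>i<max N L. hcomp x i)"
    using N(1) L sum_lessThan_extend by (metis max.cobounded1 max.cobounded2)+
  then show ?thesis
    using N(2)[symmetric] by simp
qed

lemma hcomp_add: "hcomp (x + y) i = hcomp x i + hcomp y i"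
proof -
  obtain L where L: "\<forall>i\<ge>L. hcomp x i = 0" "\<forall>i\<ge>L. hcomp y i = 0"
    using hcomp_eventually_zero_uniform[of "{x, y}"] by auto
  have "x + y = (\<Sum>i<L. hcomp x i + hcomp y i)"
    using sum_hcomp[OF L(1)] sum_hcomp[OF L(2)] by (simp add: sum.distrib)
  moreover have "\<forall>i. hcomp x i + hcomp y i \<in> Rg i"
    using hcomp_Rg subspace_Rg vs.subspace_add by blast
  ultimately have "hcomp (x + y) = (\<lambda>i. hcomp x i + hcomp y i)"
    using L by (intro hcomp_eqI) auto
  then show ?thesis
    by simp
qed

lemma hcomp_homogeneous: "y \<in> Rg n \<Longrightarrow> hcomp y i = (if i = n then y else 0)"
proof -
  assume "y \<in> Rg n"
  then have "hcomp y = (\<lambda>i. if i = n then y else 0)"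
    using zero_Rg by (intro hcomp_eqI[where N = "Suc n"]) (auto simp: sum.delta)
  then show ?thesis
    by simp
qed

lemma homogeneous_degree_unique: "x \<in> Rg i \<Longrightarrow> x \<in> Rg j \<Longrightarrow> x \<noteq> 0 \<Longrightarrow> i = j"
  using hcomp_homogeneous[of x i i] hcomp_homogeneous[of x j i] by (auto split: if_splits)

lemma hdeg_eq: "x \<in> Rg i \<Longrightarrow> x \<noteq> 0 \<Longrightarrow> hdeg Rg x = i"
  unfolding hdeg_def by (rule the_equality) (use homogeneous_degree_unique in blast)+

lemma hcomp_mult_homogeneous:
  assumes "x \<in> Rg e"
  shows "hcomp (x * a) i = (if e \<le> i then x * hcomp a (i - e) else 0)"
proof -
  define g where "g i = (if e \<le> i then x * hcomp a (i - e) else 0)" for i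
  obtain N where N: "\<forall>i\<ge>N. hcomp a i = 0"
    using hcomp_eventually_zero by blast
  have g_Rg: "\<forall>i. g i \<in> Rg i"
  proof
    fix i
    show "g i \<in> Rg i"
      using mult_Rg[OF assms hcomp_Rg, of a "i - e"] zero_Rg by (cases "e \<le> i") (simp_all add: g_def)
  qed
  have g_zero: "\<forall>i\<ge>N + e. g i = 0"
    using N unfolding g_def by auto
  have "x * a = x * (\<Sum>i<N. hcomp a i)"
    using sum_hcomp[OF N] by simp
  also have "\<dots> = (\<Sum>i<N. g (i + e))"
    unfolding g_def by (simp add: sum_distrib_left)
  also have "\<dots> = (\<Sum>i\<in>{e..<N + e}. g i)"
    using sum.shift_bounds_nat_ivl[of g 0 e N] by (simp add: atLeast0LessThan)
  also have "\<dots> = (\<Sum>i<N + e. g i)"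
    unfolding g_def by (intro sum.mono_neutral_left) auto
  finally have "hcomp (x * a) = g"
    by (rule hcomp_eqI[OF g_Rg g_zero])
  then show ?thesis
    unfolding g_def by simp
qed

lemma hcomp_add_mult_homogeneous:
  "x \<in> Rg e \<Longrightarrow> hcomp (j + x * a) i = hcomp j i + (if e \<le> i then x * hcomp a (i - e) else 0)"
  by (simp add: hcomp_add hcomp_mult_homogeneous)

lemma right_ideal_scale: "right_ideal I \<Longrightarrow> x \<in> I \<Longrightarrow> scale c x \<in> I"
  using right_ideal_mult[of I x "scale c 1"] scale_eq_mult[of c x] by simp

lemma subspace_right_ideal_Int_Rg:
  assumes "right_ideal I"
  shows "vs.subspace (I \<inter> Rg n)"
  unfolding vs.subspace_def
proof (intro conjI ballI allI)
  show "0 \<in> I \<inter> Rg n"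
    using right_ideal_zero[OF assms] zero_Rg by blast
  show "x + y \<in> I \<inter> Rg n" if "x \<in> I \<inter> Rg n" "y \<in> I \<inter> Rg n" for x y
    using that right_ideal_add[OF assms] vs.subspace_add[OF subspace_Rg] by blast
  show "scale c x \<in> I \<inter> Rg n" if "x \<in> I \<inter> Rg n" for c x
    using that right_ideal_scale[OF assms] vs.subspace_scale[OF subspace_Rg] by blast
qed

lemma hom_right_ideal_hcomp:
  assumes "hom_right_ideal Rg I" "x \<in> I"
  shows "hcomp x i \<in> I"
proof -
  obtain n f where f: "\<forall>i. f i \<in> Rg i \<inter> I" "x = (\<Sum>i<n. f i)"
    using assms unfolding hom_right_ideal_def by blast
  have "hcomp x = (\<lambda>i. if i < n then f i else 0)"
    using f zero_Rg by (intro hcomp_eqI[where N = n]) auto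
  moreover have "0 \<in> I"
    using assms(1) right_ideal_zero hom_right_ideal_right_ideal by blast
  ultimately show ?thesis
    using f(1) by simp
qed

lemma hom_right_ideal_subsetI:
  assumes "hom_right_ideal Rg I" "right_ideal J" "\<And>n. I \<inter> Rg n \<subseteq> J"
  shows "I \<subseteq> J"
proof
  fix y assume "y \<in> I"
  obtain N where "\<forall>i\<ge>N. hcomp y i = 0"
    using hcomp_eventually_zero by blast
  moreover have "hcomp y i \<in> J" for i
    using hom_right_ideal_hcomp[OF assms(1) \<open>y \<in> I\<close>] hcomp_Rg assms(3) by blast
  ultimately show "y \<in> J"
    using sum_hcomp[of N y] right_ideal_sum[OF assms(2), of "{..<N}" "hcomp y"] by simp
qed

lemma hom_right_ideal_UNIV: "hom_right_ideal Rg UNIV"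
  unfolding hom_right_ideal_def
proof (intro conjI ballI right_ideal_UNIV)
  fix x :: 'a
  obtain f N where "\<forall>i. f i \<in> Rg i" "x = (\<Sum>i<N. f i)"
    using graded_decomposition by blast
  then show "\<exists>n f. (\<forall>i. f i \<in> Rg i \<inter> UNIV) \<and> x = (\<Sum>i<n. f i)"
    by auto
qed

lemma ex_min_hom_gens:
  assumes "fin_gen I" "hom_right_ideal Rg I"
  shows "\<exists>G. min_hom_gens Rg I G"
proof -
  obtain G0 where G0: "finite G0" "I = rideal_gen G0"
    using assms(1) unfolding fin_gen_def by blast
  obtain N where N: "\<forall>g\<in>G0. \<forall>i\<ge>N. hcomp g i = 0"
    using hcomp_eventually_zero_uniform[OF G0(1)] by blast
  define G1 where "G1 = {hcomp g i | g i. g \<in> G0 \<and> i < N}"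
  have "G1 \<subseteq> I"
    unfolding G1_def using G0(2) rideal_gen_superset hom_right_ideal_hcomp[OF assms(2)] by blast
  then have "rideal_gen G1 \<subseteq> I"
    using hom_right_ideal_right_ideal[OF assms(2)] by (rule rideal_gen_minimal[rotated])
  moreover have "G0 \<subseteq> rideal_gen G1"
  proof
    fix g assume "g \<in> G0"
    then have "hcomp g i \<in> G1" if "i < N" for i
      unfolding G1_def using that by blast
    then have "(\<Sum>i<N. hcomp g i) \<in> rideal_gen G1"
      using rideal_gen_superset by (intro right_ideal_sum[OF right_ideal_rideal_gen]) blast
    then show "g \<in> rideal_gen G1"
      using sum_hcomp N \<open>g \<in> G0\<close> by simp
  qed
  ultimately have G1: "rideal_gen G1 = I"
    using G0(2) rideal_gen_minimal[OF right_ideal_rideal_gen] by blast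
  have "finite G1"
    unfolding G1_def using G0(1) by (intro finite_image_set2) simp_all
  then obtain G where G: "G \<subseteq> G1" "rideal_gen G = rideal_gen G1"
    "\<And>g. g \<in> G \<Longrightarrow> rideal_gen (G - {g}) \<noteq> rideal_gen G1"
    using obtain_irredundant_generators by blast
  have "\<forall>g\<in>G1. homogeneous_elt Rg g"
    unfolding G1_def homogeneous_elt_def using hcomp_Rg by blast
  then have "min_hom_gens Rg I G"
    unfolding min_hom_gens_def using G[unfolded G1] by blast
  then show ?thesis ..
qed

lemma obtain_generators_deg_le_mdeg:
  assumes I: "fin_gen I" "hom_right_ideal Rg I"
  obtains G where "rideal_gen G = I" "\<And>g. g \<in> G \<Longrightarrow> \<exists>k \<le> mdeg Rg I. g \<in> Rg k"
proof -
  define G where "G = (SOME G. min_hom_gens Rg I G)"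
  have G: "min_hom_gens Rg I G"
    unfolding G_def using someI_ex[OF ex_min_hom_gens[OF I]] .
  have mdeg_eq: "mdeg Rg I = Max (insert 0 (hdeg Rg ` G))"
    unfolding mdeg_def G_def ..
  have "\<exists>k \<le> mdeg Rg I. g \<in> Rg k" if g: "g \<in> G" for g
  proof -
    obtain k where k: "g \<in> Rg k"
      using min_hom_gensD(2)[OF G g] unfolding homogeneous_elt_def by blast
    have "g \<noteq> 0"
    proof
      assume "g = 0"
      then have "rideal_gen (G - {g}) = I"
        using min_hom_gensD(1)[OF G] by (simp add: rideal_gen_Diff_zero)
      then show False
        using min_hom_gensD(3)[OF G g] by contradiction
    qed
    then have "k \<in> insert 0 (hdeg Rg ` G)"
      using hdeg_eq[OF k] g by blast
    then have "k \<le> mdeg Rg I"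
      unfolding mdeg_eq using min_hom_gens_finite[OF I(1) G] by simp
    then show ?thesis
      using k by blast
  qed
  then show thesis
    using that min_hom_gensD(1)[OF G] by blast
qed

text \<open>If all generators of \<open>I = J + xR\<close> had degree below \<open>deg x\<close>, their components would
  show that they all lie in \<open>J\<close>.\<close>
lemma degree_le_mdeg:
  assumes I: "fin_gen I" "hom_right_ideal Rg I" and J: "hom_right_ideal Rg J" "J \<noteq> I"
    and x: "x \<in> Rg e" and I_eq: "I = {j + x * a | j a. j \<in> J}"
  shows "e \<le> mdeg Rg I"
proof (rule ccontr)
  assume "\<not> e \<le> mdeg Rg I"
  obtain G where G: "rideal_gen G = I" "\<And>g. g \<in> G \<Longrightarrow> \<exists>k \<le> mdeg Rg I. g \<in> Rg k"
    using obtain_generators_deg_le_mdeg[OF I] by blast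
  have "G \<subseteq> J"
  proof
    fix g assume "g \<in> G"
    then obtain k where k: "g \<in> Rg k" "k < e"
      using G(2) \<open>\<not> e \<le> mdeg Rg I\<close> by fastforce
    have "g \<in> I"
      using G(1) rideal_gen_superset \<open>g \<in> G\<close> by blast
    then obtain j a where "g = j + x * a" "j \<in> J"
      unfolding I_eq by blast
    then have "g = hcomp j k"
      using hcomp_homogeneous[OF k(1), of k] hcomp_add_mult_homogeneous[OF x] k(2) by simp
    then show "g \<in> J"
      using hom_right_ideal_hcomp[OF J(1) \<open>j \<in> J\<close>] by simp
  qed
  then have "I \<subseteq> J"
    using rideal_gen_minimal[OF hom_right_ideal_right_ideal[OF J(1)]] G(1) by blast
  moreover have "J \<subseteq> I"
  proof
    fix j assume "j \<in> J"
    then show "j \<in> I"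
      unfolding I_eq by (intro CollectI exI[of _ j] exI[of _ 0]) simp
  qed
  ultimately show False
    using J(2) by blast
qed

section \<open>Hilbert series\<close>

lemma R_plus_Int_Rg_0: "R_plus Rg \<inter> Rg 0 = {0}"
proof
  show "R_plus Rg \<inter> Rg 0 \<subseteq> {0}"
  proof
    fix x assume x: "x \<in> R_plus Rg \<inter> Rg 0"
    then obtain n f where f: "\<forall>i. f i \<in> Rg (Suc i)" "x = (\<Sum>i<n. f i)"
      unfolding R_plus_def by blast
    define g where "g j = (if j = 0 then 0 else if j - 1 < n then f (j - 1) else 0)" for j
    have "x = (\<Sum>j<Suc n. g j)"
      unfolding sum.lessThan_Suc_shift g_def using f(2) by simp
    moreover have "\<forall>j. g j \<in> Rg j"
      unfolding g_def using f(1) zero_Rg by (auto simp: gr0_conv_Suc)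
    moreover have "\<forall>j\<ge>Suc n. g j = 0"
      unfolding g_def by auto
    ultimately have "hcomp x = g"
      by (intro hcomp_eqI) auto
    then have "hcomp x 0 = 0"
      unfolding g_def by simp
    then show "x \<in> {0}"
      using hcomp_homogeneous[of x 0 0] x by simp
  qed
  have "(0::'a) \<in> R_plus Rg"
    unfolding R_plus_def by (intro CollectI exI[of _ 0] exI[of _ "\<lambda>_. 0"]) (simp add: zero_Rg)
  then show "{0} \<subseteq> R_plus Rg \<inter> Rg 0"
    using zero_Rg by blast
qed

lemma Rg_subset_R_plus: "Rg (Suc n) \<subseteq> R_plus Rg"
proof
  fix y assume "y \<in> Rg (Suc n)"
  then have "\<forall>i. (if i = n then y else 0) \<in> Rg (Suc i)" "y = (\<Sum>i<Suc n. if i = n then y else 0)"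
    using zero_Rg by (auto simp: sum.delta)
  then show "y \<in> R_plus Rg"
    unfolding R_plus_def by (intro CollectI exI[of _ "Suc n"] exI[of _ "\<lambda>i. if i = n then y else 0"]) simp
qed

lemma hilbert_series_nth: "fps_nth (hilbert_series scale Rg V) n = int (vs.dim (V \<inter> Rg n))"
  unfolding hilbert_series_def by simp

lemma hilbert_series_zero: "hilbert_series scale Rg {0} = 0"
  using zero_Rg by (simp add: fps_eq_iff hilbert_series_nth vs.dim_zero)

lemma hilbert_series_UNIV:
  "hilbert_series scale Rg UNIV =
     fps_const (fps_nth (hilbert_series scale Rg UNIV) 0) + hilbert_series scale Rg (R_plus Rg)"
proof (rule fps_ext)
  fix n
  have "R_plus Rg \<inter> Rg n = (if n = 0 then {0} else Rg n)"
    using R_plus_Int_Rg_0 Rg_subset_R_plus by (cases n) auto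
  then show "fps_nth (hilbert_series scale Rg UNIV) n =
     fps_nth (fps_const (fps_nth (hilbert_series scale Rg UNIV) 0) + hilbert_series scale Rg (R_plus Rg)) n"
    by (auto simp: hilbert_series_nth vs.dim_zero)
qed

lemma add_principal_Int_Rg:
  assumes J: "hom_right_ideal Rg J" and x: "x \<in> Rg e"
  shows "{j + x * a | j a. j \<in> J} \<inter> Rg n =
    {j + x * a | j a. j \<in> J \<inter> Rg n \<and> a \<in> (if e \<le> n then Rg (n - e) else {0})}"
proof (intro equalityI subsetI)
  fix y assume "y \<in> {j + x * a | j a. j \<in> J} \<inter> Rg n"
  then obtain j a where y: "y = j + x * a" "j \<in> J" "y \<in> Rg n"
    by blast
  have "y = hcomp y n"
    using hcomp_homogeneous[OF y(3), of n] by simp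
  also have "\<dots> = hcomp j n + x * (if e \<le> n then hcomp a (n - e) else 0)"
    using y(1) by (simp add: hcomp_add_mult_homogeneous[OF x])
  finally have "y = hcomp j n + x * (if e \<le> n then hcomp a (n - e) else 0)" .
  moreover have "hcomp j n \<in> J \<inter> Rg n"
    using hom_right_ideal_hcomp[OF J y(2)] hcomp_Rg by blast
  moreover have "(if e \<le> n then hcomp a (n - e) else 0) \<in> (if e \<le> n then Rg (n - e) else {0})"
    using hcomp_Rg by simp
  ultimately show "y \<in> {j + x * a | j a. j \<in> J \<inter> Rg n \<and> a \<in> (if e \<le> n then Rg (n - e) else {0})}"
    by blast
next
  fix y assume "y \<in> {j + x * a | j a. j \<in> J \<inter> Rg n \<and> a \<in> (if e \<le> n then Rg (n - e) else {0})}"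
  then obtain j a where y: "y = j + x * a" "j \<in> J \<inter> Rg n"
    and a: "a \<in> (if e \<le> n then Rg (n - e) else {0})"
    by blast
  have "x * a \<in> Rg n"
    using mult_Rg[OF x, of a "n - e"] a zero_Rg by (cases "e \<le> n") auto
  then have "y \<in> Rg n"
    using y subspace_Rg vs.subspace_add by blast
  then show "y \<in> {j + x * a | j a. j \<in> J} \<inter> Rg n"
    using y by blast
qed

end

definition coeffwise_less :: "'a::order fps \<Rightarrow> 'a fps \<Rightarrow> bool" where
  "coeffwise_less f g \<longleftrightarrow> (\<forall>n. fps_nth f n \<le> fps_nth g n) \<and> f \<noteq> g"

lemma wf_coeffwise_less_on:
  assumes "finite S"
  shows "wf {(f, g). f \<in> S \<and> g \<in> S \<and> coeffwise_less f g}" (is "wf ?r")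
proof -
  have "trans ?r"
    unfolding trans_def
  proof (intro allI impI)
    fix f g h
    assume "(f, g) \<in> ?r" "(g, h) \<in> ?r"
    then have fg: "coeffwise_less f g" and gh: "coeffwise_less g h" and "f \<in> S" "h \<in> S"
      by auto
    have "fps_nth f n \<le> fps_nth h n" for n
      using fg gh order_trans unfolding coeffwise_less_def by blast
    moreover have "f \<noteq> h"
    proof
      assume "f = h"
      then have "fps_nth f n = fps_nth g n" for n
        using fg gh antisym unfolding coeffwise_less_def by blast
      then show False
        using fg fps_ext unfolding coeffwise_less_def by blast
    qed
    ultimately show "(f, h) \<in> ?r"
      using \<open>f \<in> S\<close> \<open>h \<in> S\<close> unfolding coeffwise_less_def by blast
  qed
  moreover have "irrefl ?r"
    by (simp add: irrefl_def coeffwise_less_def)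
  ultimately have "acyclic ?r"
    by (simp add: acyclic_irrefl trancl_id)
  moreover have "finite ?r"
    by (rule finite_subset[of _ "S \<times> S"]) (use assms in auto)
  ultimately show ?thesis
    by (rule finite_acyclic_wf[rotated])
qed

locale standard_graded = graded +
  assumes standard_algebra: "standard_algebra scale Rg"
begin

lemma finite_dim_Rg: "\<exists>B. finite B \<and> Rg n \<subseteq> vs.span B"
proof -
  have "\<forall>n. \<exists>B. finite B \<and> vs.span B = Rg n"
    using standard_algebra unfolding standard_algebra_def by (elim conjE)
  then show ?thesis
    by (metis order.refl)
qed

lemma Rg_0: "Rg 0 = range (\<lambda>c. scale c 1)"
  using standard_algebra unfolding standard_algebra_def by (elim conjE)

text \<open>A nonzero element of degree 0 is a nonzero scalar, hence a unit.\<close>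
lemma add_principal_degree_0:
  assumes "right_ideal J" "x \<in> Rg 0" "x \<noteq> 0"
  shows "{j + x * a | j a. j \<in> J} = UNIV"
proof -
  obtain c where c: "x = scale c 1"
    using assms(2) Rg_0 by blast
  then have "c \<noteq> 0"
    using assms(3) by auto
  have x_mult: "x * z = scale c z" for z
    unfolding c using scale_mult_left[of c 1 z] by simp
  have "y \<in> {j + x * a | j a. j \<in> J}" for y
  proof (intro CollectI exI conjI)
    show "y = 0 + x * scale (inverse c) y"
      using \<open>c \<noteq> 0\<close> by (simp add: x_mult)
  qed (rule right_ideal_zero[OF assms(1)])
  then show ?thesis
    by blast
qed

lemma hilbert_series_strict_mono:
  assumes J: "hom_right_ideal Rg J" and I: "hom_right_ideal Rg I" and "J \<subseteq> I" "J \<noteq> I"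
  shows "coeffwise_less (hilbert_series scale Rg J) (hilbert_series scale Rg I)"
proof -
  have sub: "vs.subspace (J \<inter> Rg n)" "vs.subspace (I \<inter> Rg n)" for n
    using subspace_right_ideal_Int_Rg hom_right_ideal_right_ideal I J by blast+
  have le: "vs.dim (J \<inter> Rg n) \<le> vs.dim (I \<inter> Rg n)" for n
  proof -
    obtain B where "finite B" "Rg n \<subseteq> vs.span B"
      using finite_dim_Rg by blast
    then show ?thesis
      using \<open>J \<subseteq> I\<close> by (intro vs.dim_le_dim_subspace[OF _ sub(2), where S = B]) auto
  qed
  have "hilbert_series scale Rg J \<noteq> hilbert_series scale Rg I"
  proof
    assume eq: "hilbert_series scale Rg J = hilbert_series scale Rg I"
    have "J \<inter> Rg n = I \<inter> Rg n" for n
    proof -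
      have "vs.dim (J \<inter> Rg n) = vs.dim (I \<inter> Rg n)"
        using arg_cong[OF eq, of "\<lambda>h. fps_nth h n"] by (simp add: hilbert_series_nth)
      moreover obtain B where "finite B" "Rg n \<subseteq> vs.span B"
        using finite_dim_Rg by blast
      ultimately show ?thesis
        using \<open>J \<subseteq> I\<close> by (intro vs.subspace_eq_if_dim_eq[OF _ sub, where S = B]) auto
    qed
    then have "I \<subseteq> J"
      using hom_right_ideal_subsetI[OF I hom_right_ideal_right_ideal[OF J]] by blast
    then show False
      using \<open>J \<subseteq> I\<close> \<open>J \<noteq> I\<close> by blast
  qed
  then show ?thesis
    using le unfolding coeffwise_less_def by (simp add: hilbert_series_nth)
qed

text \<open>The exact sequence \<open>0 \<rightarrow> (J : x)(-e) \<rightarrow> J \<oplus> R(-e) \<rightarrow> J + xR \<rightarrow> 0\<close>, read off degreewise.\<close>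
lemma hilbert_series_add_principal:
  assumes J: "hom_right_ideal Rg J" and x: "x \<in> Rg e"
  shows "hilbert_series scale Rg {j + x * a | j a. j \<in> J} = hilbert_series scale Rg J +
     fps_X ^ e * (hilbert_series scale Rg UNIV - hilbert_series scale Rg (colon J x))"
proof (rule fps_ext)
  fix n
  let ?I = "{j + x * a | j a. j \<in> J}"
  show "fps_nth (hilbert_series scale Rg ?I) n = fps_nth (hilbert_series scale Rg J +
     fps_X ^ e * (hilbert_series scale Rg UNIV - hilbert_series scale Rg (colon J x))) n"
  proof (cases "e \<le> n")
    case False
    then have "?I \<inter> Rg n = J \<inter> Rg n"
      unfolding add_principal_Int_Rg[OF J x] by auto
    then show ?thesis
      using False by (simp add: hilbert_series_nth fps_X_power_mult_nth)
  next
    case True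
    obtain B1 B2 where B: "finite B1" "Rg n \<subseteq> vs.span B1" "finite B2" "Rg (n - e) \<subseteq> vs.span B2"
      using finite_dim_Rg by meson
    have lin: "Vector_Spaces.linear scale scale (\<lambda>a. x * a)"
      unfolding Vector_Spaces.linear_iff
      by (simp add: vs.vector_space_axioms distrib_left scale_mult_right)
    have "{a \<in> Rg (n - e). x * a \<in> J \<inter> Rg n} = colon J x \<inter> Rg (n - e)"
      using mult_Rg[OF x] True unfolding colon_def by fastforce
    moreover have "?I \<inter> Rg n = {j + x * a | j a. j \<in> J \<inter> Rg n \<and> a \<in> Rg (n - e)}"
      unfolding add_principal_Int_Rg[OF J x] using True by simp
    moreover have "vs.dim {j + x * a | j a. j \<in> J \<inter> Rg n \<and> a \<in> Rg (n - e)}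
        + vs.dim {a \<in> Rg (n - e). x * a \<in> J \<inter> Rg n} = vs.dim (J \<inter> Rg n) + vs.dim (Rg (n - e))"
      using B subspace_Rg subspace_right_ideal_Int_Rg[OF hom_right_ideal_right_ideal[OF J]]
      by (intro vs.dim_sum_image_add_dim_preimage[OF lin]) blast+
    ultimately show ?thesis
      using True by (simp add: hilbert_series_nth fps_X_power_mult_nth)
  qed
qed

end

section \<open>Polynomial matrices\<close>

lemma degree_det_le:
  fixes A :: "'a::comm_ring_1 poly mat"
  assumes A: "A \<in> carrier_mat n n" and deg: "\<And>i j. i < n \<Longrightarrow> j < n \<Longrightarrow> degree (A $$ (i, j)) \<le> d"
  shows "degree (det A) \<le> n * d"
  unfolding det_def'[OF A]
proof (rule degree_sum_le)
  fix p assume "p \<in> {p. p permutes {0..<n}}"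
  then have p: "p permutes {0..<n}"
    by simp
  have "degree (\<Prod>i = 0..<n. A $$ (i, p i)) \<le> (\<Sum>i = 0..<n. degree (A $$ (i, p i)))"
    using degree_prod_sum_le[of "{0..<n}" "\<lambda>i. A $$ (i, p i)"] by (simp add: o_def)
  also have "\<dots> \<le> (\<Sum>i = 0..<n. d)"
    using deg permutes_in_image[OF p] by (intro sum_mono) simp
  finally have "degree (\<Prod>i = 0..<n. A $$ (i, p i)) \<le> n * d"
    by simp
  moreover have "degree (signof p :: 'a poly) = 0"
    by (simp add: sign_def)
  ultimately show "degree (signof p * (\<Prod>i = 0..<n. A $$ (i, p i))) \<le> n * d"
    using degree_mult_le[of "signof p" "\<Prod>i = 0..<n. A $$ (i, p i)"] by simp
qed (simp add: finite_permutations)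

text \<open>Every permutation other than the identity passes through an entry \<open>(i, p i)\<close> with
  \<open>i\<close> minimal among its moved points with respect to \<open>r\<close>, and that entry vanishes.\<close>
lemma det_unit_diagonal_wf:
  fixes M :: "'a::comm_ring_1 mat"
  assumes M: "M \<in> carrier_mat n n" and "wf r" and diag: "\<And>i. i < n \<Longrightarrow> M $$ (i, i) = 1"
    and off: "\<And>i j. i < n \<Longrightarrow> j < n \<Longrightarrow> i \<noteq> j \<Longrightarrow> M $$ (i, j) \<noteq> 0 \<Longrightarrow> (j, i) \<in> r"
  shows "det M = 1"
proof -
  have vanish: "(\<Prod>i = 0..<n. M $$ (i, p i)) = 0" if p: "p permutes {0..<n}" "p \<noteq> id" for p
  proof -
    define moved where "moved = {i. i < n \<and> p i \<noteq> i}"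
    obtain i0 where "p i0 \<noteq> i0"
      using p(2) by (metis eq_id_iff)
    then have "i0 \<in> moved"
      using permutes_not_in[OF p(1)] unfolding moved_def by fastforce
    then obtain i where i: "i \<in> moved" and min: "\<And>j. (j, i) \<in> r \<Longrightarrow> j \<notin> moved"
      using wfE_min[OF \<open>wf r\<close>] by metis
    have "i < n" "p i \<noteq> i"
      using i unfolding moved_def by auto
    moreover have "p i < n"
      using permutes_in_image[OF p(1)] \<open>i < n\<close> by simp
    moreover have "p (p i) \<noteq> p i"
      using permutes_inj[OF p(1)] \<open>p i \<noteq> i\<close> by (metis injD)
    ultimately have "M $$ (i, p i) = 0"
      using off[of i "p i"] min[of "p i"] unfolding moved_def by fastforce
    then show ?thesis
      using \<open>i < n\<close> by (intro prod_zero) auto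
  qed
  have "det M = (\<Sum>p\<in>{p. p permutes {0..<n}}. signof p * (\<Prod>i = 0..<n. M $$ (i, p i)))"
    by (rule det_def'[OF M])
  also have "\<dots> = (\<Sum>p\<in>{p. p permutes {0..<n}}. if p = id then 1 else 0)"
    using vanish diag by (intro sum.cong) (auto simp: sign_id)
  also have "\<dots> = 1"
    using permutes_id[of "{0..<n}"] finite_permutations[of "{0..<n}"] by (simp add: sum.delta')
  finally show ?thesis .
qed

lemma poly_det_0: "poly (det (A :: 'a::comm_ring_1 poly mat)) 0 = det (map_mat (\<lambda>p. poly p 0) A)"
proof -
  interpret eval_0: comm_ring_hom "\<lambda>p::'a poly. poly p 0"
    by unfold_locales simp_all
  show ?thesis
    by simp
qed

lemma degree_adj_mat_le:
  fixes A :: "'a::comm_ring_1 poly mat"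
  assumes A: "A \<in> carrier_mat n n" and deg_A: "\<And>i j. i < n \<Longrightarrow> j < n \<Longrightarrow> degree (A $$ (i, j)) \<le> d"
    and "i < n" "j < n"
  shows "degree (adj_mat A $$ (i, j)) \<le> (n - 1) * d"
proof -
  have "adj_mat A $$ (i, j) = (- 1) ^ (j + i) * det (mat_delete A j i)"
    using assms(1,3,4) by (simp add: adj_mat_def cofactor_def)
  moreover have "degree (det (mat_delete A j i)) \<le> (n - 1) * d"
    using A by (intro degree_det_le[OF mat_delete_carrier[OF A]])
      (auto simp: mat_delete_def intro!: deg_A)
  ultimately show ?thesis
    by (cases "even (j + i)") simp_all
qed

lemma cramer_fps_poly:
  fixes A :: "'a::comm_ring_1 poly mat" and b :: "nat \<Rightarrow> 'a poly" and h :: "nat \<Rightarrow> 'a fps"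
  assumes A: "A \<in> carrier_mat n n"
    and sys: "\<And>i. i < n \<Longrightarrow> (\<Sum>j = 0..<n. fps_of_poly (A $$ (i, j)) * h j) = fps_of_poly (b i)"
    and deg_A: "\<And>i j. i < n \<Longrightarrow> j < n \<Longrightarrow> degree (A $$ (i, j)) \<le> d"
    and deg_b: "\<And>i. i < n \<Longrightarrow> degree (b i) \<le> d"
    and i: "i < n"
  obtains p where "fps_of_poly (det A) * h i = fps_of_poly p" "degree p \<le> n * d"
proof
  let ?adj = "adj_mat A"
  have adj_A: "(\<Sum>j = 0..<n. ?adj $$ (i, j) * A $$ (j, k)) = (if i = k then det A else 0)"
    if "k < n" for k
  proof -
    have "(?adj * A) $$ (i, k) = (det A \<cdot>\<^sub>m 1\<^sub>m n) $$ (i, k)"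
      using adj_mat(3)[OF A] by simp
    then show ?thesis
      using adj_mat(1)[OF A] A i that by (simp add: scalar_prod_def)
  qed
  have "fps_of_poly (det A) * h i = (\<Sum>k = 0..<n. if i = k then fps_of_poly (det A) * h k else 0)"
    using i by (simp add: sum.delta)
  also have "\<dots> = (\<Sum>k = 0..<n. fps_of_poly (if i = k then det A else 0) * h k)"
    by (intro sum.cong) auto
  also have "\<dots> = (\<Sum>k = 0..<n. \<Sum>j = 0..<n.
      fps_of_poly (?adj $$ (i, j)) * (fps_of_poly (A $$ (j, k)) * h k))"
    by (intro sum.cong) (simp_all add: adj_A[symmetric] fps_of_poly_sum fps_of_poly_mult
        sum_distrib_right mult.assoc)
  also have "\<dots> = (\<Sum>j = 0..<n. fps_of_poly (?adj $$ (i, j)) * fps_of_poly (b j))"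
    by (subst sum.swap) (simp add: sum_distrib_left[symmetric] sys)
  also have "\<dots> = fps_of_poly (\<Sum>j = 0..<n. ?adj $$ (i, j) * b j)"
    by (simp add: fps_of_poly_sum fps_of_poly_mult)
  finally show "fps_of_poly (det A) * h i = fps_of_poly (\<Sum>j = 0..<n. ?adj $$ (i, j) * b j)" .
  show "degree (\<Sum>j = 0..<n. ?adj $$ (i, j) * b j) \<le> n * d"
  proof (rule degree_sum_le)
    fix j assume "j \<in> {0..<n}"
    then have "degree (?adj $$ (i, j)) \<le> (n - 1) * d" "degree (b j) \<le> d"
      using degree_adj_mat_le[OF A deg_A i] deg_b by auto
    then have "degree (?adj $$ (i, j) * b j) \<le> (n - 1) * d + d"
      using degree_mult_le[of "?adj $$ (i, j)" "b j"] by linarith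
    also have "\<dots> = n * d"
      using i by (cases n) auto
    finally show "degree (?adj $$ (i, j) * b j) \<le> n * d" .
  qed simp
qed

section \<open>Triangular systems of power series\<close>

lemma fps_system_common_denominator:
  fixes A :: "'a::comm_ring_1 poly mat" and b :: "nat \<Rightarrow> 'a poly" and h :: "nat \<Rightarrow> 'a fps"
  assumes A: "A \<in> carrier_mat n n" and "wf r"
    and sys: "\<And>i. i < n \<Longrightarrow> (\<Sum>j = 0..<n. fps_of_poly (A $$ (i, j)) * h j) = fps_of_poly (b i)"
    and deg_A: "\<And>i j. i < n \<Longrightarrow> j < n \<Longrightarrow> degree (A $$ (i, j)) \<le> d"
    and deg_b: "\<And>i. i < n \<Longrightarrow> degree (b i) \<le> d"
    and diag: "\<And>i. i < n \<Longrightarrow> poly (A $$ (i, i)) 0 = 1"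
    and off: "\<And>i j. i < n \<Longrightarrow> j < n \<Longrightarrow> i \<noteq> j \<Longrightarrow> poly (A $$ (i, j)) 0 \<noteq> 0 \<Longrightarrow> (j, i) \<in> r"
  obtains q where "q \<noteq> 0" "degree q \<le> n * d"
    "\<And>i. i < n \<Longrightarrow> \<exists>p. degree p \<le> n * d \<and> fps_of_poly q * h i = fps_of_poly p"
proof
  have "det (map_mat (\<lambda>p. poly p 0) A) = 1"
    using A diag off by (intro det_unit_diagonal_wf[OF _ \<open>wf r\<close>]) auto
  then show "det A \<noteq> 0"
    using poly_det_0[of A] by auto
  show "degree (det A) \<le> n * d"
    using A deg_A by (rule degree_det_le)
  show "\<exists>p. degree p \<le> n * d \<and> fps_of_poly (det A) * h i = fps_of_poly p" if "i < n" for i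
    using cramer_fps_poly[OF A sys deg_A deg_b that] by blast
qed

lemma triangular_fps_system_common_denominator:
  fixes H :: "'a::comm_ring_1 fps set" and a :: "'a fps \<Rightarrow> 'a fps \<Rightarrow> 'a poly"
    and b :: "'a fps \<Rightarrow> 'a poly"
  assumes "finite H" "wf r"
    and sys: "\<And>h. h \<in> H \<Longrightarrow> (\<Sum>g\<in>H. fps_of_poly (a h g) * g) = fps_of_poly (b h)"
    and deg_a: "\<And>h g. h \<in> H \<Longrightarrow> g \<in> H \<Longrightarrow> degree (a h g) \<le> d"
    and deg_b: "\<And>h. h \<in> H \<Longrightarrow> degree (b h) \<le> d"
    and diag: "\<And>h. h \<in> H \<Longrightarrow> poly (a h h) 0 = 1"
    and off: "\<And>h g. h \<in> H \<Longrightarrow> g \<in> H \<Longrightarrow> g \<noteq> h \<Longrightarrow> poly (a h g) 0 \<noteq> 0 \<Longrightarrow> (g, h) \<in> r"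
  obtains q where "q \<noteq> 0" "degree q \<le> d * card H"
    "\<And>h. h \<in> H \<Longrightarrow> \<exists>p. degree p \<le> d * card H \<and> fps_of_poly q * h = fps_of_poly p"
proof -
  define n where "n = card H"
  obtain en where en: "bij_betw en {0..<n} H"
    using ex_bij_betw_nat_finite[OF \<open>finite H\<close>] unfolding n_def by blast
  have en_H: "en i \<in> H" if "i < n" for i
    using bij_betw_apply[OF en] that by simp
  have en_inj: "en i \<noteq> en j" if "i < n" "j < n" "i \<noteq> j" for i j
    using bij_betw_imp_inj_on[OF en] that by (auto dest: inj_onD)
  define A where "A = mat n n (\<lambda>(i, j). a (en i) (en j))"
  have A: "A \<in> carrier_mat n n"
    by (simp add: A_def)
  have A_entry: "A $$ (i, j) = a (en i) (en j)" if "i < n" "j < n" for i j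
    using that by (simp add: A_def)
  obtain q where q: "q \<noteq> 0" "degree q \<le> n * d"
    "\<And>i. i < n \<Longrightarrow> \<exists>p. degree p \<le> n * d \<and> fps_of_poly q * en i = fps_of_poly p"
  proof (rule fps_system_common_denominator[OF A wf_inv_image[OF \<open>wf r\<close>], where b = "\<lambda>i. b (en i)"])
    show "(\<Sum>j = 0..<n. fps_of_poly (A $$ (i, j)) * en j) = fps_of_poly (b (en i))" if "i < n" for i
      using sum.reindex_bij_betw[OF en, of "\<lambda>g. fps_of_poly (a (en i) g) * g"] sys[OF en_H] that
      by (simp add: A_entry)
    show "degree (A $$ (i, j)) \<le> d" if "i < n" "j < n" for i j
      using that deg_a en_H by (simp add: A_entry)
    show "degree (b (en i)) \<le> d" if "i < n" for i
      using that deg_b en_H by simp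
    show "poly (A $$ (i, i)) 0 = 1" if "i < n" for i
      using that diag en_H by (simp add: A_entry)
    show "(j, i) \<in> inv_image r en" if "i < n" "j < n" "i \<noteq> j" "poly (A $$ (i, j)) 0 \<noteq> 0" for i j
      using that off en_H en_inj by (simp add: A_entry)
  qed (use that in blast)
  have "\<exists>p. degree p \<le> n * d \<and> fps_of_poly q * h = fps_of_poly p" if "h \<in> H" for h
  proof -
    have "h \<in> en ` {0..<n}"
      using bij_betw_imp_surj_on[OF en] that by simp
    then show ?thesis
      using q(3) by auto
  qed
  then show thesis
    using that q(1,2) unfolding n_def by (simp add: mult.commute)
qed

lemma sum_of_bool_eq_mult:
  fixes u :: "'a::semiring_1"
  assumes "finite H" "u \<in> insert 0 H"
  shows "(\<Sum>g\<in>H. of_bool (g = u) * g) = u"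
proof -
  have "(\<Sum>g\<in>H. of_bool (g = u) * g) = (\<Sum>g\<in>H. if g = u then u else 0)"
    by (intro sum.cong) auto
  also have "\<dots> = u"
    using assms by (auto simp: sum.delta')
  finally show ?thesis .
qed

lemma fps_of_poly_of_bool: "fps_of_poly (of_bool b) = of_bool b"
  by (cases b) simp_all

text \<open>The coefficient of \<open>f\<close> in \<open>h - g + z\<^sup>e (k - R)\<close>: the relation
  \<open>h = g + z\<^sup>e (c + R - k)\<close> becomes the linear equation \<open>h - g + z\<^sup>e (k - R) = c z\<^sup>e\<close>.\<close>
definition relation_coeff :: "'a::comm_ring_1 fps \<Rightarrow> 'a fps \<Rightarrow> 'a fps \<Rightarrow> 'a fps \<Rightarrow> nat \<Rightarrow> 'a fps \<Rightarrow> 'a poly"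
  where "relation_coeff R h g k e f =
    of_bool (f = h) - of_bool (f = g) + monom 1 e * (of_bool (f = k) - of_bool (f = R))"

lemma sum_relation_coeff:
  assumes "finite H" "h \<in> insert 0 H" "g \<in> insert 0 H" "k \<in> insert 0 H" "R \<in> insert 0 H"
    and "h = g + fps_X ^ e * (fps_const c + R - k)"
  shows "(\<Sum>f\<in>H. fps_of_poly (relation_coeff R h g k e f) * f) = fps_of_poly (monom c e)"
proof -
  have "fps_of_poly (relation_coeff R h g k e f) * f = of_bool (f = h) * f - of_bool (f = g) * f
      + fps_X ^ e * (of_bool (f = k) * f - of_bool (f = R) * f)" for f
    by (simp add: relation_coeff_def fps_of_poly_add fps_of_poly_diff fps_of_poly_mult
        fps_of_poly_monom' fps_of_poly_of_bool algebra_simps)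
  then have "(\<Sum>f\<in>H. fps_of_poly (relation_coeff R h g k e f) * f) =
      (\<Sum>f\<in>H. of_bool (f = h) * f) - (\<Sum>f\<in>H. of_bool (f = g) * f)
      + fps_X ^ e * ((\<Sum>f\<in>H. of_bool (f = k) * f) - (\<Sum>f\<in>H. of_bool (f = R) * f))"
    by (simp only: sum.distrib sum_subtractf sum_distrib_left right_diff_distrib)
  also have "\<dots> = h - g + fps_X ^ e * (k - R)"
    using assms(1-5) by (simp only: sum_of_bool_eq_mult)
  also have "\<dots> = fps_of_poly (monom c e)"
    using assms(6) by (simp add: fps_of_poly_monom algebra_simps)
  finally show ?thesis .
qed

lemma degree_relation_coeff_le: "degree (relation_coeff R h g k e f) \<le> e"
proof -
  have "degree (monom 1 e * (of_bool (f = k) - of_bool (f = R) :: 'a poly)) \<le> e"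
    using degree_mult_le[of "monom 1 e"] degree_monom_le[of 1 e] by (cases "f = k"; cases "f = R") auto
  then show ?thesis
    unfolding relation_coeff_def by (intro degree_add_le degree_diff_le) auto
qed

lemma poly_relation_coeff_0:
  "(e = 0 \<Longrightarrow> k = R) \<Longrightarrow> poly (relation_coeff R h g k e f) 0 = of_bool (f = h) - of_bool (f = g)"
  by (cases "e = 0") (simp_all add: relation_coeff_def poly_monom power_0_left)

text \<open>The relations form a square linear system for the nonzero members of \<open>S\<close> whose matrix
  is unitriangular at \<open>z = 0\<close>; for \<open>E h = 0\<close> this needs \<open>K h = R\<close>, so that the terms in
  \<open>K h\<close> and \<open>R\<close> cancel there.\<close>
lemma common_denominator_of_relations:
  fixes S :: "'a::linordered_idom fps set"
  assumes "finite S" "R \<in> S"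
    and rel: "\<And>h. h \<in> S \<Longrightarrow> h \<noteq> 0 \<Longrightarrow> G h \<in> S \<and> K h \<in> S \<and> E h \<le> d \<and> coeffwise_less (G h) h \<and>
      h = G h + fps_X ^ E h * (fps_const c + R - K h) \<and> (E h = 0 \<longrightarrow> K h = R)"
  obtains q where "q \<noteq> 0" "degree q \<le> d * card {h \<in> S. h \<noteq> 0}"
    "\<And>h. h \<in> S \<Longrightarrow> \<exists>p. degree p \<le> d * card {h \<in> S. h \<noteq> 0} \<and> fps_of_poly q * h = fps_of_poly p"
proof -
  define H where "H = {h \<in> S. h \<noteq> 0}"
  have "finite H"
    using assms(1) unfolding H_def by simp
  have in_H: "u \<in> insert 0 H" if "u \<in> S" for u
    using that unfolding H_def by blast
  have rel_H: "G h \<in> S \<and> K h \<in> S \<and> E h \<le> d \<and> coeffwise_less (G h) h \<and>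
      h = G h + fps_X ^ E h * (fps_const c + R - K h) \<and> (E h = 0 \<longrightarrow> K h = R)" if "h \<in> H" for h
    using rel that unfolding H_def by blast
  obtain q where q: "q \<noteq> 0" "degree q \<le> d * card H"
    "\<And>h. h \<in> H \<Longrightarrow> \<exists>p. degree p \<le> d * card H \<and> fps_of_poly q * h = fps_of_poly p"
  proof (rule triangular_fps_system_common_denominator[OF \<open>finite H\<close>, where
        r = "{(f, g). f \<in> S \<and> g \<in> S \<and> coeffwise_less f g}"
        and a = "\<lambda>h. relation_coeff R h (G h) (K h) (E h)" and b = "\<lambda>h. monom c (E h)"])
    show "wf {(f, g). f \<in> S \<and> g \<in> S \<and> coeffwise_less f g}"
      using assms(1) by (rule wf_coeffwise_less_on)
    show "(\<Sum>f\<in>H. fps_of_poly (relation_coeff R h (G h) (K h) (E h) f) * f) =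
        fps_of_poly (monom c (E h))" if "h \<in> H" for h
      using rel_H[OF that] that in_H assms(2) by (intro sum_relation_coeff[OF \<open>finite H\<close>]) auto
    show "degree (relation_coeff R h (G h) (K h) (E h) f) \<le> d" if "h \<in> H" for h f
      using degree_relation_coeff_le rel_H[OF that] order_trans by blast
    show "degree (monom c (E h)) \<le> d" if "h \<in> H" for h
      using degree_monom_le rel_H[OF that] order_trans by blast
    show "poly (relation_coeff R h (G h) (K h) (E h) h) 0 = 1" if "h \<in> H" for h
      using rel_H[OF that] by (auto simp: poly_relation_coeff_0 coeffwise_less_def)
    show "(f, h) \<in> {(f, g). f \<in> S \<and> g \<in> S \<and> coeffwise_less f g}"
      if "h \<in> H" "f \<in> H" "f \<noteq> h" "poly (relation_coeff R h (G h) (K h) (E h) f) 0 \<noteq> 0" for h f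
      using that rel_H[OF that(1)] unfolding H_def by (auto simp: poly_relation_coeff_0)
  qed (use that in blast)
  have "\<exists>p. degree p \<le> d * card H \<and> fps_of_poly q * h = fps_of_poly p" if "h \<in> S" for h
    using q(3)[of h] that unfolding H_def by (cases "h = 0") (auto intro!: exI[of _ 0])
  then show thesis
    using that q(1,2) unfolding H_def by blast
qed

lemma fps_rational_of_relations:
  fixes S :: "'a::linordered_idom fps set"
  assumes "finite S" "R \<in> S" "T = fps_const c + R"
    and rel: "\<And>h. h \<in> S \<Longrightarrow> h \<noteq> 0 \<Longrightarrow> \<exists>g k e. g \<in> S \<and> k \<in> S \<and> e \<le> d \<and>
      coeffwise_less g h \<and> h = g + fps_X ^ e * (T - k) \<and> (e = 0 \<longrightarrow> k = R)"
  obtains q where "q \<noteq> 0" "degree q \<le> d * card {h \<in> S. h \<noteq> 0}"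
    "\<And>h. h \<in> insert T S \<Longrightarrow>
       \<exists>p. degree p \<le> d * card {h \<in> S. h \<noteq> 0} \<and> fps_of_poly q * h = fps_of_poly p"
proof -
  let ?s = "card {h \<in> S. h \<noteq> 0}"
  define related where "related h g k e \<longleftrightarrow> g \<in> S \<and> k \<in> S \<and> e \<le> d \<and>
      coeffwise_less g h \<and> h = g + fps_X ^ e * (fps_const c + R - k) \<and> (e = 0 \<longrightarrow> k = R)"
    for h g k :: "'a fps" and e :: nat
  have "\<forall>h\<in>{h \<in> S. h \<noteq> 0}. \<exists>g k e. related h g k e"
    using rel unfolding related_def assms(3) by blast
  then obtain G where "\<forall>h\<in>{h \<in> S. h \<noteq> 0}. \<exists>k e. related h (G h) k e"
    by (rule bchoice[THEN exE])
  then obtain K where "\<forall>h\<in>{h \<in> S. h \<noteq> 0}. \<exists>e. related h (G h) (K h) e"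
    by (rule bchoice[THEN exE])
  then obtain E where "\<forall>h\<in>{h \<in> S. h \<noteq> 0}. related h (G h) (K h) (E h)"
    by (rule bchoice[THEN exE])
  then have "G h \<in> S \<and> K h \<in> S \<and> E h \<le> d \<and> coeffwise_less (G h) h \<and>
      h = G h + fps_X ^ E h * (fps_const c + R - K h) \<and> (E h = 0 \<longrightarrow> K h = R)"
    if "h \<in> S" "h \<noteq> 0" for h
    using that unfolding related_def by blast
  then obtain q where q: "q \<noteq> 0" "degree q \<le> d * ?s"
    "\<And>h. h \<in> S \<Longrightarrow> \<exists>p. degree p \<le> d * ?s \<and> fps_of_poly q * h = fps_of_poly p"
    using common_denominator_of_relations[OF assms(1,2)] by blast
  obtain p where p: "degree p \<le> d * ?s" "fps_of_poly q * R = fps_of_poly p"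
    using q(3)[OF assms(2)] by blast
  have "fps_of_poly q * T = fps_of_poly (Polynomial.smult c q + p)"
    using p(2) unfolding assms(3) by (simp add: fps_of_poly_add fps_of_poly_smult algebra_simps)
  moreover have "degree (Polynomial.smult c q + p) \<le> d * ?s"
    using q(2) p(1) degree_smult_le[of c q] by (intro degree_add_le) auto
  ultimately show thesis
    using that q by blast
qed

section \<open>Rate filtrations\<close>

lemma rate_filtration_of_degreeD:
  assumes "rate_filtration_of_degree Rg F d"
  shows "I \<in> F \<Longrightarrow> fin_gen I" "I \<in> F \<Longrightarrow> hom_right_ideal Rg I" "I \<in> F \<Longrightarrow> mdeg Rg I \<le> d"
    "R_plus Rg \<in> F"
    "I \<in> F \<Longrightarrow> I \<noteq> {0} \<Longrightarrow> \<exists>J\<in>F. \<exists>x. J \<noteq> I \<and> homogeneous_elt Rg x \<and> x \<in> I \<and>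
       I = {j + x * a | j a. j \<in> J} \<and> mdeg Rg J \<le> mdeg Rg I \<and> colon J x \<in> F"
  using assms unfolding rate_filtration_of_degree_def rate_filtration_def by blast+

lemma (in graded) rate_filtration_step:
  assumes F: "rate_filtration_of_degree Rg F d" and I: "I \<in> F" "I \<noteq> {0}"
  obtains J x e where "J \<in> F" "colon J x \<in> F" "J \<subseteq> I" "J \<noteq> I" "x \<in> Rg e" "x \<noteq> 0" "e \<le> d"
    "I = {j + x * a | j a. j \<in> J}"
proof -
  obtain J x where J: "J \<in> F" "J \<noteq> I" "homogeneous_elt Rg x" "colon J x \<in> F"
    and I_eq: "I = {j + x * a | j a. j \<in> J}"
    using rate_filtration_of_degreeD(5)[OF F I] by blast
  obtain e where x: "x \<in> Rg e"
    using J(3) unfolding homogeneous_elt_def by blast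
  have "e \<le> d"
    using degree_le_mdeg[OF rate_filtration_of_degreeD(1,2)[OF F I(1)]
        rate_filtration_of_degreeD(2)[OF F J(1)] J(2) x I_eq]
      rate_filtration_of_degreeD(3)[OF F I(1)] by simp
  have "J \<subseteq> I"
  proof
    fix j assume "j \<in> J"
    then show "j \<in> I"
      unfolding I_eq by (intro CollectI exI[of _ j] exI[of _ 0]) simp
  qed
  moreover have "x \<noteq> 0"
  proof
    assume "x = 0"
    then have "I = J"
      unfolding I_eq by auto
    then show False
      using J(2) by simp
  qed
  ultimately show thesis
    using that J(1,2,4) x \<open>e \<le> d\<close> I_eq by blast
qed

context standard_graded
begin

text \<open>For \<open>e = 0\<close> the generator \<open>x\<close> is a unit, so \<open>I = R\<close>, and the relation used instead is
  \<open>R(z) = R\<^sub>+(z) + (R(z) - R\<^sub>+(z))\<close>.\<close>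
lemma rate_filtration_hilbert_relation:
  assumes F: "rate_filtration_of_degree Rg F d" and I: "I \<in> F" "I \<noteq> {0}"
  obtains J C e where "J \<in> F" "C \<in> F" "e \<le> d"
    "coeffwise_less (hilbert_series scale Rg J) (hilbert_series scale Rg I)"
    "hilbert_series scale Rg I = hilbert_series scale Rg J +
       fps_X ^ e * (hilbert_series scale Rg UNIV - hilbert_series scale Rg C)"
    "e = 0 \<Longrightarrow> C = R_plus Rg"
proof -
  note F_hom = rate_filtration_of_degreeD(2)[OF F]
  obtain J x e where J: "J \<in> F" "colon J x \<in> F" "J \<subseteq> I" "J \<noteq> I"
    and x: "x \<in> Rg e" "x \<noteq> 0" "e \<le> d" and I_eq: "I = {j + x * a | j a. j \<in> J}"
    using rate_filtration_step[OF F I] by blast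
  show thesis
  proof (cases "e = 0")
    case True
    then have "I = UNIV"
      using add_principal_degree_0[OF hom_right_ideal_right_ideal[OF F_hom[OF J(1)]]] x I_eq
      by simp
    moreover have "R_plus Rg \<noteq> UNIV"
      using R_plus_Int_Rg_0 x True by blast
    ultimately have "coeffwise_less (hilbert_series scale Rg (R_plus Rg)) (hilbert_series scale Rg I)"
      using hilbert_series_strict_mono[OF F_hom[OF rate_filtration_of_degreeD(4)[OF F]]
          hom_right_ideal_UNIV] by simp
    then show thesis
      using that[of "R_plus Rg" "R_plus Rg" 0] rate_filtration_of_degreeD(4)[OF F] \<open>I = UNIV\<close>
      by simp
  next
    case False
    show thesis
    proof (rule that[of J "colon J x" e])
      show "coeffwise_less (hilbert_series scale Rg J) (hilbert_series scale Rg I)"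
        using hilbert_series_strict_mono[OF F_hom[OF J(1)] F_hom[OF I(1)] J(3,4)] .
      show "hilbert_series scale Rg I = hilbert_series scale Rg J +
          fps_X ^ e * (hilbert_series scale Rg UNIV - hilbert_series scale Rg (colon J x))"
        unfolding I_eq by (rule hilbert_series_add_principal[OF F_hom[OF J(1)] x(1)])
    qed (use J(1,2) x(3) False in simp_all)
  qed
qed

lemma hilbert_series_relation:
  assumes F: "rate_filtration_of_degree Rg F d"
    and "H \<in> hilbert_series scale Rg ` F" "H \<noteq> 0"
  shows "\<exists>g k e. g \<in> hilbert_series scale Rg ` F \<and> k \<in> hilbert_series scale Rg ` F \<and> e \<le> d \<and>
    coeffwise_less g H \<and> H = g + fps_X ^ e * (hilbert_series scale Rg UNIV - k) \<and>
    (e = 0 \<longrightarrow> k = hilbert_series scale Rg (R_plus Rg))"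
proof -
  obtain I where I: "I \<in> F" "I \<noteq> {0}" and H: "H = hilbert_series scale Rg I"
    using assms(2,3) hilbert_series_zero by blast
  obtain J C e where "J \<in> F" "C \<in> F" "e \<le> d"
    "coeffwise_less (hilbert_series scale Rg J) (hilbert_series scale Rg I)"
    "hilbert_series scale Rg I = hilbert_series scale Rg J +
       fps_X ^ e * (hilbert_series scale Rg UNIV - hilbert_series scale Rg C)"
    "e = 0 \<Longrightarrow> C = R_plus Rg"
    using rate_filtration_hilbert_relation[OF F I] by blast
  then show ?thesis
    unfolding H by (intro exI[of _ "hilbert_series scale Rg J"] exI[of _ "hilbert_series scale Rg C"]
        exI[of _ e]) auto
qed

end

theorem mainTheorem15:
  fixes scale :: "'k::field \<Rightarrow> 'a::ring_1 \<Rightarrow> 'a"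
    and Rg :: "nat \<Rightarrow> 'a set"
    and F :: "'a set set"
    and d s :: nat
  assumes "standard_algebra scale Rg"
    and "rate_filtration_of_degree Rg F d"
    and "finite (hilbert_series scale Rg ` F)"
    and "s = card {h \<in> hilbert_series scale Rg ` F. h \<noteq> 0}"
  shows "\<forall>H \<in> insert (hilbert_series scale Rg UNIV) (hilbert_series scale Rg ` F).
           \<exists>p q :: int poly. q \<noteq> 0 \<and> fps_of_poly q * H = fps_of_poly p \<and>
             degree p \<le> d * s \<and> degree q \<le> d * s"
proof -
  interpret standard_graded scale Rg
  proof
    show "graded_algebra scale Rg"
      using assms(1) unfolding standard_algebra_def by (elim conjE)
  qed (rule assms(1))
  have "hilbert_series scale Rg (R_plus Rg) \<in> hilbert_series scale Rg ` F"
    using rate_filtration_of_degreeD(4)[OF assms(2)] by blast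
  then obtain q where "q \<noteq> 0" "degree q \<le> d * s"
    "\<And>H. H \<in> insert (hilbert_series scale Rg UNIV) (hilbert_series scale Rg ` F) \<Longrightarrow>
       \<exists>p. degree p \<le> d * s \<and> fps_of_poly q * H = fps_of_poly p"
    using fps_rational_of_relations[OF assms(3) _ hilbert_series_UNIV
        hilbert_series_relation[OF assms(2)]] unfolding assms(4) by blast
  then show ?thesis
    by blast
qed

end
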